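(* Let $R=R_{K\times L,(x_0,y_0)}$ be a rectangle and let $f:\Omega\to\mathbb{R}$ be an $R$-local function. Then $\mu^{\mathrm{per}}_{\Lambda,\lambda}(f\cdot\tau f)\ge0$ in each of the two cases: (a) $\Lambda=R_{2K\times L}$ and $\tau$ is the reflection of $\mathbb{R}^2$ through the vertical line $x=x_0+K$; (b) $\Lambda=R_{K\times2L}$ and $\tau$ is the reflection through the horizontal line $y=y_0+L$. Here $(\tau f)(\sigma)=f(\sigma\circ\tau)$, with $\tau$ restricted to $\mathbb{Z}^2$.
   Context: Tiles: $T_{(x,y)}=[x-1,x+1]\times[y-1,y+1]$; $\Omega=\{\sigma\in\{0,1\}^{\mathbb{Z}^2}: \sigma(u)=\sigma(v)=1,u\ne v\Rightarrow\mathrm{int}(T_u)\cap\mathrm{int}(T_v)=\emptyset\}$. A rectangle is a closed axis-parallel rectangle with integer corners; $R_{K\times L,(x,y)}=[x,x+K]\times[y,y+L]$, $R_{K\times L}=R_{K\times L,(0,0)}$. A face is a unit square with integer corners, vacant in $\sigma$ if contained in no tile of $\sigma$. For a rectangle $\Lambda$ and $\lambda>0$: $w_{\Lambda,\lambda}(\sigma)=\lambda^{-\frac14\#\{\text{vacant faces }\subset\Lambda\}}$; $\Omega^{\mathrm{per}}_\Lambda$ is the set of $\sigma\in\Omega$ periodic with periods $(\mathrm{Width}(\Lambda),0)$ and $(0,\mathrm{Height}(\Lambda))$; $\mu^{\mathrm{per}}_{\Lambda,\lambda}(\sigma)=w_{\Lambda,\lambda}(\sigma)/\sum_{\sigma'\in\Omega^{\mathrm{per}}_\Lambda}w_{\Lambda,\lambda}(\sigma')$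 on $\Omega^{\mathrm{per}}_\Lambda$. A function $f$ on $\Omega$ is $R$-local if $f(\sigma)$ depends only on $\sigma$ restricted to $R\cap\mathbb{Z}^2$ ($R$ closed). *)

theory Defs
  imports "HOL-Analysis.Analysis"
begin

type_synonym config = "int \<times> int \<Rightarrow> bool"

definition tile :: "int \<times> int \<Rightarrow> (real \<times> real) set" where
  "tile u = {real_of_int (fst u) - 1 .. real_of_int (fst u) + 1}
          \<times> {real_of_int (snd u) - 1 .. real_of_int (snd u) + 1}"

definition Omega :: "config set" where
  "Omega = {\<sigma>. \<forall>u v. \<sigma> u \<and> \<sigma> v \<and> u \<noteq> v \<longrightarrow> interior (tile u) \<inter> interior (tile v) = {}}"

definition rect :: "int \<Rightarrow> int \<Rightarrow> int \<Rightarrow> int \<Rightarrow> (real \<times> real) set" where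
  "rect K L x y = {real_of_int x .. real_of_int (x + K)} \<times> {real_of_int y .. real_of_int (y + L)}"

definition face :: "int \<times> int \<Rightarrow> (real \<times> real) set" where
  "face p = {real_of_int (fst p) .. real_of_int (fst p) + 1}
          \<times> {real_of_int (snd p) .. real_of_int (snd p) + 1}"

definition vacant :: "config \<Rightarrow> int \<times> int \<Rightarrow> bool" where
  "vacant \<sigma> p \<longleftrightarrow> \<not> (\<exists>u. \<sigma> u \<and> face p \<subseteq> tile u)"

definition n_vacant :: "(real \<times> real) set \<Rightarrow> config \<Rightarrow> nat" where
  "n_vacant Lam \<sigma> = card {p. face p \<subseteq> Lam \<and> vacant \<sigma> p}"

definition weight :: "(real \<times> real) set \<Rightarrow> real \<Rightarrow> config \<Rightarrow> real" where
  "weight Lam lam \<sigma> = lam powr (- (real (n_vacant Lam \<sigma>) / 4))"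

definition Omega_per :: "int \<Rightarrow> int \<Rightarrow> config set" where
  "Omega_per W H = {\<sigma> \<in> Omega. \<forall>a b. \<sigma> (a + W, b) = \<sigma> (a, b) \<and> \<sigma> (a, b + H) = \<sigma> (a, b)}"

definition mu_per :: "int \<Rightarrow> int \<Rightarrow> int \<Rightarrow> int \<Rightarrow> real \<Rightarrow> (config \<Rightarrow> real) \<Rightarrow> real" where
  "mu_per K L x y lam g =
     (\<Sum>\<sigma>\<in>Omega_per K L. weight (rect K L x y) lam \<sigma> * g \<sigma>)
     / (\<Sum>\<sigma>\<in>Omega_per K L. weight (rect K L x y) lam \<sigma>)"

definition is_local :: "(real \<times> real) set \<Rightarrow> (config \<Rightarrow> real) \<Rightarrow> bool" where
  "is_local R f \<longleftrightarrow> (\<forall>\<sigma>\<in>Omega. \<forall>\<sigma>'\<in>Omega.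
      (\<forall>a b. (real_of_int a, real_of_int b) \<in> R \<longrightarrow> \<sigma> (a, b) = \<sigma>' (a, b)) \<longrightarrow> f \<sigma> = f \<sigma>')"

definition reflV :: "int \<Rightarrow> int \<times> int \<Rightarrow> int \<times> int" where
  "reflV c p = (2 * c - fst p, snd p)"

definition reflH :: "int \<Rightarrow> int \<times> int \<Rightarrow> int \<times> int" where
  "reflH c p = (fst p, 2 * c - snd p)"

end

theory Submission
  imports Defs "HOL-Library.Periodic_Fun"
begin

text \<open>On the torus of width \<open>2K\<close>, the reflection through \<open>x = x0 + K\<close> exchanges the strip of
  columns \<open>x0, \<dots>, x0 + K\<close> with the complementary strip and fixes its two boundary columns.
  A periodic configuration \<open>\<sigma>\<close> is therefore determined by the pair (left strip of \<open>\<sigma>\<close>,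
  left strip of \<open>\<sigma> \<circ> \<tau>\<close>); these two pieces agree on the boundary columns, and conversely any two
  admissible pieces with the same boundary glue to an admissible periodic configuration, because
  a tile only interacts with the sites adjacent to its centre. Both the weight and the local
  function \<open>f\<close> factorise over the two strips, so grouping the pairs by their common boundary
  values writes \<open>\<Sum>\<^sub>\<sigma> w(\<sigma>) f(\<sigma>) f(\<sigma> \<circ> \<tau>)\<close> as a sum of squares. The horizontal case
  reduces to the vertical one by transposing the lattice.\<close>

section \<open>Admissible configurations and vacant faces\<close>

definition adjacent :: "int \<times> int \<Rightarrow> int \<times> int \<Rightarrow> bool" where
  "adjacent u v \<longleftrightarrow> u \<noteq> v \<and> \<bar>fst u - fst v\<bar> \<le> 1 \<and> \<bar>snd u - snd v\<bar> \<le> 1"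

definition admissible :: "config \<Rightarrow> bool" where
  "admissible \<sigma> \<longleftrightarrow> (\<forall>u v. \<sigma> u \<and> \<sigma> v \<longrightarrow> \<not> adjacent u v)"

lemma interior_tiles_disjoint_iff:
  "interior (tile u) \<inter> interior (tile v) = {} \<longleftrightarrow> 2 \<le> \<bar>fst u - fst v\<bar> \<or> 2 \<le> \<bar>snd u - snd v\<bar>"
proof -
  have "interior (tile u) \<inter> interior (tile v) = {} \<longleftrightarrow>
      min (real_of_int (fst u)) (real_of_int (fst v)) + 1 \<le> max (real_of_int (fst u)) (real_of_int (fst v)) - 1 \<or>
      min (real_of_int (snd u)) (real_of_int (snd v)) + 1 \<le> max (real_of_int (snd u)) (real_of_int (snd v)) - 1"
    by (simp add: tile_def interior_Times Times_Int_Times min_add_distrib_left max_diff_distrib_left)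
  then show ?thesis by (simp add: min_def max_def) linarith
qed

lemma Omega_iff_admissible: "\<sigma> \<in> Omega \<longleftrightarrow> admissible \<sigma>"
proof -
  have "\<not> adjacent u v \<longleftrightarrow> (u \<noteq> v \<longrightarrow> 2 \<le> \<bar>fst u - fst v\<bar> \<or> 2 \<le> \<bar>snd u - snd v\<bar>)" for u v
    by (auto simp: adjacent_def)
  then show ?thesis unfolding Omega_def admissible_def interior_tiles_disjoint_iff by blast
qed

lemma admissible_comp:
  assumes "admissible \<sigma>" and "\<And>u v. adjacent u v \<Longrightarrow> adjacent (g u) (g v)"
  shows "admissible (\<sigma> \<circ> g)"
  using assms unfolding admissible_def comp_def by blast

lemma admissible_glue:
  assumes "admissible \<sigma>\<^sub>1" and "admissible \<sigma>\<^sub>2"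
    and "\<And>p. p \<in> U \<Longrightarrow> \<sigma> p = \<sigma>\<^sub>1 p" and "\<And>p. p \<in> V \<Longrightarrow> \<sigma> p = \<sigma>\<^sub>2 p"
    and "\<And>u v. adjacent u v \<Longrightarrow> u \<in> U \<and> v \<in> U \<or> u \<in> V \<and> v \<in> V"
  shows "admissible \<sigma>"
  using assms unfolding admissible_def by metis

lemma unit_interval_subset_iff:
  fixes i a :: int
  shows "{real_of_int i .. real_of_int i + 1} \<subseteq> {real_of_int a - 1 .. real_of_int a + 1} \<longleftrightarrow> a = i \<or> a = i + 1"
proof -
  have "{real_of_int i .. real_of_int i + 1} \<subseteq> {real_of_int a - 1 .. real_of_int a + 1}
     \<longleftrightarrow> real_of_int a - 1 \<le> real_of_int i \<and> real_of_int i + 1 \<le> real_of_int a + 1"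
    by auto
  then show ?thesis by linarith
qed

lemma vacant_iff:
  "vacant \<sigma> (a, b) \<longleftrightarrow> \<not> \<sigma> (a, b) \<and> \<not> \<sigma> (a + 1, b) \<and> \<not> \<sigma> (a, b + 1) \<and> \<not> \<sigma> (a + 1, b + 1)"
proof -
  have "face (a, b) \<subseteq> tile (c, d) \<longleftrightarrow> (c = a \<or> c = a + 1) \<and> (d = b \<or> d = b + 1)" for c d
    unfolding face_def tile_def times_subset_iff fst_conv snd_conv unit_interval_subset_iff by simp
  then show ?thesis unfolding vacant_def by auto
qed

lemma n_vacant_rect:
  "n_vacant (rect W H 0 0) \<sigma> = card {p \<in> {0..<W} \<times> {0..<H}. vacant \<sigma> p}"
proof -
  have "face p \<subseteq> rect W H 0 0 \<longleftrightarrow> p \<in> {0..<W} \<times> {0..<H}" for p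
  proof -
    have "face p \<subseteq> rect W H 0 0 \<longleftrightarrow> 0 \<le> real_of_int (fst p) \<and> real_of_int (fst p) + 1 \<le> real_of_int W
        \<and> 0 \<le> real_of_int (snd p) \<and> real_of_int (snd p) + 1 \<le> real_of_int H"
      unfolding face_def rect_def times_subset_iff by simp
    then show ?thesis by (cases p) auto
  qed
  then show ?thesis unfolding n_vacant_def by (metis (lifting))
qed

section \<open>Periodic configurations\<close>

definition periodic :: "int \<Rightarrow> int \<Rightarrow> config \<Rightarrow> bool" where
  "periodic W H \<sigma> \<longleftrightarrow> (\<forall>a b. \<sigma> (a + W, b) = \<sigma> (a, b) \<and> \<sigma> (a, b + H) = \<sigma> (a, b))"

lemma Omega_per_iff: "\<sigma> \<in> Omega_per W H \<longleftrightarrow> admissible \<sigma> \<and> periodic W H \<sigma>"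
  unfolding Omega_per_def periodic_def Omega_iff_admissible by auto

lemma periodic_vacant:
  assumes "periodic W H \<sigma>"
  shows "vacant \<sigma> (a + W, b) = vacant \<sigma> (a, b)"
proof -
  have "\<sigma> (a + W + d, b') = \<sigma> (a + d, b')" for d b'
    using assms unfolding periodic_def by (metis add.commute add.left_commute)
  from this[of 0] this[of 1] show ?thesis by (simp add: vacant_iff)
qed

lemma periodic_fun_mod_cong:
  fixes P :: "int \<Rightarrow> 'a"
  assumes "\<And>a. P (a + W) = P a" and "a mod W = a' mod W"
  shows "P a = P a'"
proof -
  interpret periodic_fun_simple P W by standard (rule assms(1))
  have "P c = P (c mod W)" for c
    using plus_of_int[of "c mod W" "c div W"] by (simp add: mod_div_mult_eq)
  then show ?thesis using assms(2) by metis
qed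

lemma periodic_cong:
  assumes "periodic W H \<sigma>" and "a mod W = a' mod W" and "b mod H = b' mod H"
  shows "\<sigma> (a, b) = \<sigma> (a', b')"
proof -
  have "\<sigma> (a, b) = \<sigma> (a', b)"
    by (rule periodic_fun_mod_cong[where P = "\<lambda>a. \<sigma> (a, b)"]) (use assms in \<open>auto simp: periodic_def\<close>)
  also have "\<dots> = \<sigma> (a', b')"
    by (rule periodic_fun_mod_cong[where P = "\<lambda>b. \<sigma> (a', b)"]) (use assms in \<open>auto simp: periodic_def\<close>)
  finally show ?thesis .
qed

lemma finite_Omega_per:
  assumes "W > 0" and "H > 0"
  shows "finite (Omega_per W H)"
proof -
  have "Omega_per W H \<subseteq> (\<lambda>A p. (fst p mod W, snd p mod H) \<in> A) ` Pow ({0..<W} \<times> {0..<H})"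
  proof
    fix \<sigma> assume "\<sigma> \<in> Omega_per W H"
    then have per: "periodic W H \<sigma>" by (simp add: Omega_per_iff)
    have "\<sigma> = (\<lambda>p. (fst p mod W, snd p mod H) \<in> {q \<in> {0..<W} \<times> {0..<H}. \<sigma> q})"
    proof
      fix p :: "int \<times> int"
      show "\<sigma> p = ((fst p mod W, snd p mod H) \<in> {q \<in> {0..<W} \<times> {0..<H}. \<sigma> q})"
        using assms periodic_cong[OF per, of "fst p" "fst p mod W" "snd p" "snd p mod H"] by auto
    qed
    then show "\<sigma> \<in> (\<lambda>A p. (fst p mod W, snd p mod H) \<in> A) ` Pow ({0..<W} \<times> {0..<H})"
      by blast
  qed
  then show ?thesis by (rule finite_subset) simp
qed

lemma card_periodic_shift:
  fixes P :: "int \<times> int \<Rightarrow> bool"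
  assumes "W > 0" and "\<And>a b. P (a + W, b) = P (a, b)"
  shows "card {p \<in> {0..<W} \<times> B. P p} = card {p \<in> {0..<W} \<times> B. P (fst p + s, snd p)}"
proof -
  have P_mod: "P (a, b) = P (a', b)" if "a mod W = a' mod W" for a a' b
    by (rule periodic_fun_mod_cong[where P = "\<lambda>a. P (a, b)"]) (use assms that in auto)
  have [simp]: "P ((a - s) mod W + s, b) = P (a, b)" "P ((a + s) mod W, b) = P (a + s, b)" for a b
    by (rule P_mod; simp add: mod_simps)+
  have "bij_betw (\<lambda>(a, b). ((a - s) mod W, b))
      {p \<in> {0..<W} \<times> B. P p} {p \<in> {0..<W} \<times> B. P (fst p + s, snd p)}"
    by (rule bij_betw_byWitness[where f' = "\<lambda>(a, b). ((a + s) mod W, b)"])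
      (use assms(1) in \<open>auto simp: mod_simps\<close>)
  then show ?thesis by (rule bij_betw_same_card)
qed

section \<open>Reflection positivity\<close>

lemma reflection_positive_sum:
  fixes S :: "'s set" and \<tau> :: "'s \<Rightarrow> 's" and l :: "'s \<Rightarrow> 'a" and bd :: "'a \<Rightarrow> 'b"
    and g :: "'s \<Rightarrow> real"
  assumes "finite S" and "\<tau> ` S \<subseteq> S"
    and inj: "inj_on (\<lambda>\<sigma>. (l \<sigma>, l (\<tau> \<sigma>))) S"
    and same_boundary: "\<And>\<sigma>. \<sigma> \<in> S \<Longrightarrow> bd (l \<sigma>) = bd (l (\<tau> \<sigma>))"
    and glue: "\<And>\<sigma>\<^sub>1 \<sigma>\<^sub>2. \<sigma>\<^sub>1 \<in> S \<Longrightarrow> \<sigma>\<^sub>2 \<in> S \<Longrightarrow> bd (l \<sigma>\<^sub>1) = bd (l \<sigma>\<^sub>2) \<Longrightarrow>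
      \<exists>\<sigma>\<in>S. l \<sigma> = l \<sigma>\<^sub>1 \<and> l (\<tau> \<sigma>) = l \<sigma>\<^sub>2"
    and determined: "\<And>\<sigma> \<sigma>'. \<sigma> \<in> S \<Longrightarrow> \<sigma>' \<in> S \<Longrightarrow> l \<sigma> = l \<sigma>' \<Longrightarrow> g \<sigma> = g \<sigma>'"
  shows "0 \<le> (\<Sum>\<sigma>\<in>S. g \<sigma> * g (\<tau> \<sigma>))"
proof -
  define G where "G a = g (SOME \<sigma>. \<sigma> \<in> S \<and> l \<sigma> = a)" for a
  have g_G: "g \<sigma> = G (l \<sigma>)" if "\<sigma> \<in> S" for \<sigma>
    unfolding G_def by (rule determined[OF that]) (use someI[of "\<lambda>\<sigma>'. \<sigma>' \<in> S \<and> l \<sigma>' = l \<sigma>"] that in auto)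
  define A where "A = l ` S"
  have "finite A" unfolding A_def using \<open>finite S\<close> by simp
  have pairs: "(\<lambda>\<sigma>. (l \<sigma>, l (\<tau> \<sigma>))) ` S = (SIGMA a:A. {b \<in> A. bd b = bd a})"
  proof
    show "(\<lambda>\<sigma>. (l \<sigma>, l (\<tau> \<sigma>))) ` S \<subseteq> (SIGMA a:A. {b \<in> A. bd b = bd a})"
      using \<open>\<tau> ` S \<subseteq> S\<close> same_boundary unfolding A_def by fastforce
    show "(SIGMA a:A. {b \<in> A. bd b = bd a}) \<subseteq> (\<lambda>\<sigma>. (l \<sigma>, l (\<tau> \<sigma>))) ` S"
    proof (clarsimp simp: A_def)
      fix \<sigma>\<^sub>1 \<sigma>\<^sub>2 assume "\<sigma>\<^sub>1 \<in> S" "\<sigma>\<^sub>2 \<in> S" "bd (l \<sigma>\<^sub>2) = bd (l \<sigma>\<^sub>1)"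
      with glue obtain \<sigma> where "\<sigma> \<in> S" "l \<sigma> = l \<sigma>\<^sub>1" "l (\<tau> \<sigma>) = l \<sigma>\<^sub>2" by metis
      then show "(l \<sigma>\<^sub>1, l \<sigma>\<^sub>2) \<in> (\<lambda>\<sigma>. (l \<sigma>, l (\<tau> \<sigma>))) ` S"
        by (intro image_eqI[where x = \<sigma>]) simp_all
    qed
  qed
  have "(\<Sum>\<sigma>\<in>S. g \<sigma> * g (\<tau> \<sigma>)) = (\<Sum>(a, b)\<in>(SIGMA a:A. {b \<in> A. bd b = bd a}). G a * G b)"
    using sum.reindex[OF inj, of "\<lambda>(a, b). G a * G b"] \<open>\<tau> ` S \<subseteq> S\<close>
    by (auto simp: pairs g_G intro!: sum.cong)
  also have "\<dots> = (\<Sum>a\<in>A. G a * (\<Sum>b\<in>{b \<in> A. bd b = bd a}. G b))"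
    by (simp add: sum.Sigma[symmetric] \<open>finite A\<close> sum_distrib_left)
  \<comment> \<open>group the pairs by their common boundary value\<close>
  also have "\<dots> = (\<Sum>\<eta>\<in>bd ` A. (\<Sum>a\<in>{a \<in> A. bd a = \<eta>}. G a) * (\<Sum>b\<in>{b \<in> A. bd b = \<eta>}. G b))"
    by (subst sum.group[symmetric, OF \<open>finite A\<close>, where g = bd]) (auto simp: sum_distrib_right \<open>finite A\<close>)
  also have "\<dots> \<ge> 0"
    by (rule sum_nonneg) simp
  finally show ?thesis .
qed

section \<open>Reflection through a vertical line\<close>

locale vertical_reflection =
  fixes K L x0 :: int
  assumes K_pos: "0 < K" and L_pos: "0 < L"
begin

text \<open>\<open>col a\<close> is the column of \<open>a\<close> on the torus of width \<open>2K\<close>, counted from \<open>x0\<close>; the strip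
  \<open>col \<le> K\<close> is the left half, which contains the support of an \<open>rect K L x0 y0\<close>-local function.\<close>

definition col :: "int \<Rightarrow> int" where
  "col a = (a - x0) mod (2 * K)"

abbreviation mirror :: "int \<times> int \<Rightarrow> int \<times> int" where
  "mirror \<equiv> reflV (x0 + K)"

definition left_half :: "config \<Rightarrow> config" where
  "left_half \<sigma> p \<longleftrightarrow> col (fst p) \<le> K \<and> \<sigma> p"

definition boundary :: "config \<Rightarrow> config" where
  "boundary \<sigma> p \<longleftrightarrow> (col (fst p) = 0 \<or> col (fst p) = K) \<and> \<sigma> p"

definition strip_vacant :: "config \<Rightarrow> nat" where
  "strip_vacant \<sigma> = card {p \<in> {0..<K} \<times> {0..<L}. vacant \<sigma> (x0 + fst p, snd p)}"

lemma col_bounds: "0 \<le> col a" "col a < 2 * K"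
  using K_pos by (simp_all add: col_def)

lemma col_add_period [simp]: "col (a + 2 * K) = col a" "col (a - 2 * K) = col a"
  by (simp_all add: col_def mod_eq_dvd_iff)

lemma col_mirror: "col (fst (mirror p)) = (if col (fst p) = 0 then 0 else 2 * K - col (fst p))"
proof -
  have "col (fst (mirror p)) = (- (fst p - x0)) mod (2 * K)"
    unfolding col_def reflV_def by (simp add: mod_eq_dvd_iff)
  then show ?thesis using zmod_zminus1_eq_if[of "fst p - x0" "2 * K"] by (simp add: col_def)
qed

lemma col_offset: "0 \<le> i \<Longrightarrow> i < 2 * K \<Longrightarrow> col (x0 + i) = i"
  by (simp add: col_def)

lemma col_adjacent:
  assumes "0 < col a" and "col a < K" and "\<bar>a' - a\<bar> \<le> 1"
  shows "col a' = col a + (a' - a)"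
proof -
  have "col a' = (col a + (a' - a)) mod (2 * K)"
    unfolding col_def by (simp add: mod_simps)
  also have "\<dots> = col a + (a' - a)"
    using assms by (intro mod_pos_pos_trivial) auto
  finally show ?thesis .
qed

lemma mirror_mirror [simp]: "mirror (mirror p) = p"
  by (simp add: reflV_def)

lemma adjacent_mirror: "adjacent u v \<Longrightarrow> adjacent (mirror u) (mirror v)"
  by (auto simp: adjacent_def reflV_def prod_eq_iff)

lemma periodic_col_cong:
  assumes "periodic (2 * K) L \<sigma>" and "col a = col a'"
  shows "\<sigma> (a, b) = \<sigma> (a', b)"
proof (rule periodic_cong[OF assms(1)])
  show "a mod (2 * K) = a' mod (2 * K)"
    using mod_add_cong[OF assms(2)[unfolded col_def], of x0 x0] by simp
qed simp

lemma mirror_fixes_boundary: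
  assumes "periodic (2 * K) L \<sigma>" and "col (fst p) = 0 \<or> col (fst p) = K"
  shows "\<sigma> (mirror p) = \<sigma> p"
proof -
  have "col (fst (mirror p)) = col (fst p)" using assms(2) col_mirror by auto
  from periodic_col_cong[OF assms(1) this, of "snd p"] show ?thesis
    by (cases p) (simp add: reflV_def)
qed

lemma Omega_per_mirror:
  assumes "\<sigma> \<in> Omega_per (2 * K) L"
  shows "\<sigma> \<circ> mirror \<in> Omega_per (2 * K) L"
proof -
  have "admissible \<sigma>" and per: "periodic (2 * K) L \<sigma>"
    using assms by (simp_all add: Omega_per_iff)
  then have "admissible (\<sigma> \<circ> mirror)" by (simp add: admissible_comp adjacent_mirror)
  moreover have "periodic (2 * K) L (\<sigma> \<circ> mirror)"
    unfolding periodic_def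
  proof (intro allI conjI)
    fix a b
    have "col (2 * (x0 + K) - (a + 2 * K)) = col (2 * (x0 + K) - a)"
      using col_add_period(2)[of "2 * (x0 + K) - a"] by (simp add: algebra_simps)
    from periodic_col_cong[OF per this] show "(\<sigma> \<circ> mirror) (a + 2 * K, b) = (\<sigma> \<circ> mirror) (a, b)"
      by (simp add: reflV_def)
    show "(\<sigma> \<circ> mirror) (a, b + L) = (\<sigma> \<circ> mirror) (a, b)"
      using per by (simp add: periodic_def reflV_def)
  qed
  ultimately show ?thesis by (simp add: Omega_per_iff)
qed

lemma col_or_col_mirror_le: "col (fst p) \<le> K \<or> col (fst (mirror p)) \<le> K"
  using col_mirror[of p] col_bounds[of "fst p"] by auto

lemma left_half_mirror_inj:
  assumes "left_half \<sigma>\<^sub>1 = left_half \<sigma>\<^sub>2" and "left_half (\<sigma>\<^sub>1 \<circ> mirror) = left_half (\<sigma>\<^sub>2 \<circ> mirror)"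
  shows "\<sigma>\<^sub>1 = \<sigma>\<^sub>2"
proof
  fix p
  from col_or_col_mirror_le[of p] show "\<sigma>\<^sub>1 p = \<sigma>\<^sub>2 p"
  proof
    assume "col (fst p) \<le> K"
    then show ?thesis using fun_cong[OF assms(1), of p] by (simp add: left_half_def)
  next
    assume "col (fst (mirror p)) \<le> K"
    then show ?thesis using fun_cong[OF assms(2), of "mirror p"] by (simp add: left_half_def)
  qed
qed

lemma boundary_left_half [simp]: "boundary (left_half \<sigma>) = boundary \<sigma>"
  using K_pos by (auto simp: boundary_def left_half_def fun_eq_iff)

lemma boundary_mirror:
  assumes "periodic (2 * K) L \<sigma>"
  shows "boundary (\<sigma> \<circ> mirror) = boundary \<sigma>"
  using mirror_fixes_boundary[OF assms] by (auto simp: boundary_def fun_eq_iff)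

lemma glue_halves:
  assumes "\<sigma>\<^sub>1 \<in> Omega_per (2 * K) L" and "\<sigma>\<^sub>2 \<in> Omega_per (2 * K) L"
    and "boundary \<sigma>\<^sub>1 = boundary \<sigma>\<^sub>2"
  shows "\<exists>\<sigma>\<in>Omega_per (2 * K) L. left_half \<sigma> = left_half \<sigma>\<^sub>1 \<and> left_half (\<sigma> \<circ> mirror) = left_half \<sigma>\<^sub>2"
proof -
  have adm: "admissible \<sigma>\<^sub>1" "admissible \<sigma>\<^sub>2"
    and per: "periodic (2 * K) L \<sigma>\<^sub>1" "periodic (2 * K) L \<sigma>\<^sub>2"
    using assms(1,2) by (simp_all add: Omega_per_iff)
  have agree: "\<sigma>\<^sub>1 p = \<sigma>\<^sub>2 (mirror p)" if "col (fst p) = 0 \<or> col (fst p) = K" for p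
    using fun_cong[OF assms(3), of p] that mirror_fixes_boundary[OF per(2) that]
    by (auto simp: boundary_def)
  define \<sigma> where "\<sigma> p = (if col (fst p) \<le> K then \<sigma>\<^sub>1 p else \<sigma>\<^sub>2 (mirror p))" for p
  have "admissible \<sigma>"
  proof (rule admissible_glue[OF adm(1) admissible_comp[OF adm(2) adjacent_mirror]])
    show "\<sigma> p = \<sigma>\<^sub>1 p" if "p \<in> {p. col (fst p) \<le> K}" for p
      using that by (simp add: \<sigma>_def)
    show "\<sigma> p = (\<sigma>\<^sub>2 \<circ> mirror) p" if "p \<in> {p. \<not> (0 < col (fst p) \<and> col (fst p) < K)}" for p
      using that agree[of p] col_bounds[of "fst p"] by (auto simp: \<sigma>_def)
    show "u \<in> {p. col (fst p) \<le> K} \<and> v \<in> {p. col (fst p) \<le> K} \<or>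
        u \<in> {p. \<not> (0 < col (fst p) \<and> col (fst p) < K)} \<and> v \<in> {p. \<not> (0 < col (fst p) \<and> col (fst p) < K)}"
      if "adjacent u v" for u v
    proof -
      have "\<bar>fst v - fst u\<bar> \<le> 1" "\<bar>fst u - fst v\<bar> \<le> 1" using that by (auto simp: adjacent_def)
      then show ?thesis using col_adjacent[of "fst u" "fst v"] col_adjacent[of "fst v" "fst u"] by fastforce
    qed
  qed
  moreover have "periodic (2 * K) L \<sigma>"
    unfolding periodic_def
  proof (intro allI conjI)
    fix a b
    have "col (2 * (x0 + K) - (a + 2 * K)) = col (2 * (x0 + K) - a)"
      using col_add_period(2)[of "2 * (x0 + K) - a"] by (simp add: algebra_simps)
    from periodic_col_cong[OF per(2) this] show "\<sigma> (a + 2 * K, b) = \<sigma> (a, b)"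
      using per(1) by (simp add: \<sigma>_def reflV_def periodic_def)
    show "\<sigma> (a, b + L) = \<sigma> (a, b)"
      using per by (simp add: \<sigma>_def reflV_def periodic_def)
  qed
  moreover have "left_half \<sigma> = left_half \<sigma>\<^sub>1"
    by (auto simp: left_half_def \<sigma>_def fun_eq_iff)
  moreover have "left_half (\<sigma> \<circ> mirror) = left_half \<sigma>\<^sub>2"
  proof
    fix p
    show "left_half (\<sigma> \<circ> mirror) p = left_half \<sigma>\<^sub>2 p"
    proof (cases "col (fst p) \<le> K \<and> col (fst (mirror p)) \<le> K")
      case True
      then have bd: "col (fst p) = 0 \<or> col (fst p) = K"
        using col_mirror[of p] by (auto split: if_splits)
      then show ?thesis
        using True agree[OF bd] mirror_fixes_boundary[OF per(1) bd] mirror_fixes_boundary[OF per(2) bd]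
        by (simp add: left_half_def \<sigma>_def)
    next
      case False
      then show ?thesis by (auto simp: left_half_def \<sigma>_def)
    qed
  qed
  ultimately show ?thesis by (auto simp: Omega_per_iff)
qed

lemma vacant_mirror: "vacant (\<sigma> \<circ> mirror) (x0 + i, b) \<longleftrightarrow> vacant \<sigma> (x0 + (2 * K - 1 - i), b)"
  by (auto simp: vacant_iff reflV_def algebra_simps)

lemma n_vacant_split:
  assumes "periodic (2 * K) L \<sigma>"
  shows "n_vacant (rect (2 * K) L 0 0) \<sigma> = strip_vacant \<sigma> + strip_vacant (\<sigma> \<circ> mirror)"
proof -
  have "n_vacant (rect (2 * K) L 0 0) \<sigma> = card {p \<in> {0..<2 * K} \<times> {0..<L}. vacant \<sigma> (fst p + x0, snd p)}"
    unfolding n_vacant_rect using K_pos periodic_vacant[OF assms]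
    by (intro card_periodic_shift[where s = x0]) auto
  also have "{p \<in> {0..<2 * K} \<times> {0..<L}. vacant \<sigma> (fst p + x0, snd p)} =
      {p \<in> {0..<K} \<times> {0..<L}. vacant \<sigma> (x0 + fst p, snd p)} \<union>
      {p \<in> {K..<2 * K} \<times> {0..<L}. vacant \<sigma> (x0 + fst p, snd p)}"
    using K_pos by (auto simp: add.commute)
  also have "card \<dots> = strip_vacant \<sigma> + card {p \<in> {K..<2 * K} \<times> {0..<L}. vacant \<sigma> (x0 + fst p, snd p)}"
    unfolding strip_vacant_def by (rule card_Un_disjoint) auto
  also have "card {p \<in> {K..<2 * K} \<times> {0..<L}. vacant \<sigma> (x0 + fst p, snd p)} = strip_vacant (\<sigma> \<circ> mirror)"
    unfolding strip_vacant_def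
    by (rule bij_betw_same_card[of "\<lambda>(i, b). (2 * K - 1 - i, b)"],
        rule bij_betw_byWitness[where f' = "\<lambda>(i, b). (2 * K - 1 - i, b)"])
      (auto simp: vacant_mirror)
  finally show ?thesis .
qed

lemma strip_vacant_left_half:
  assumes "left_half \<sigma> = left_half \<sigma>'"
  shows "strip_vacant \<sigma> = strip_vacant \<sigma>'"
proof -
  have agree: "\<sigma> (x0 + i, b) = \<sigma>' (x0 + i, b)" if "0 \<le> i" "i \<le> K" for i b
    using fun_cong[OF assms, of "(x0 + i, b)"] col_offset[of i] that K_pos by (simp add: left_half_def)
  have "vacant \<sigma> (x0 + i, b) = vacant \<sigma>' (x0 + i, b)" if "0 \<le> i" "i < K" for i b
    using that agree[of i] agree[of "i + 1"] by (simp add: vacant_iff add.assoc)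
  then show ?thesis unfolding strip_vacant_def by (auto intro!: arg_cong[where f = card])
qed

lemma left_half_determines_local:
  assumes "is_local (rect K L x0 y0) f" and "\<sigma> \<in> Omega" and "\<sigma>' \<in> Omega"
    and "left_half \<sigma> = left_half \<sigma>'"
  shows "f \<sigma> = f \<sigma>'"
proof (rule assms(1)[unfolded is_local_def, rule_format, OF assms(2,3)])
  fix a b assume "(real_of_int a, real_of_int b) \<in> rect K L x0 y0"
  then have "x0 \<le> a" "a \<le> x0 + K" by (auto simp: rect_def)
  then have "col a \<le> K" using col_offset[of "a - x0"] K_pos by simp
  then show "\<sigma> (a, b) = \<sigma>' (a, b)" using fun_cong[OF assms(4), of "(a, b)"] by (simp add: left_half_def)
qed

lemma weight_split:
  assumes "periodic (2 * K) L \<sigma>"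
  shows "weight (rect (2 * K) L 0 0) lam \<sigma>
    = lam powr (- real (strip_vacant \<sigma>) / 4) * lam powr (- real (strip_vacant (\<sigma> \<circ> mirror)) / 4)"
  by (simp add: weight_def n_vacant_split[OF assms] add_divide_distrib flip: powr_add)

theorem reflection_positive:
  assumes "is_local (rect K L x0 y0) f"
  shows "0 \<le> (\<Sum>\<sigma>\<in>Omega_per (2 * K) L. weight (rect (2 * K) L 0 0) lam \<sigma> * (f \<sigma> * f (\<sigma> \<circ> mirror)))"
proof -
  define g where "g \<sigma> = lam powr (- real (strip_vacant \<sigma>) / 4) * f \<sigma>" for \<sigma>
  have "0 \<le> (\<Sum>\<sigma>\<in>Omega_per (2 * K) L. g \<sigma> * g (\<sigma> \<circ> mirror))"
  proof (rule reflection_positive_sum[where l = left_half and bd = boundary])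
    show "finite (Omega_per (2 * K) L)"
      using K_pos L_pos by (simp add: finite_Omega_per)
    show "(\<lambda>\<sigma>. \<sigma> \<circ> mirror) ` Omega_per (2 * K) L \<subseteq> Omega_per (2 * K) L"
      using Omega_per_mirror by blast
    show "inj_on (\<lambda>\<sigma>. (left_half \<sigma>, left_half (\<sigma> \<circ> mirror))) (Omega_per (2 * K) L)"
      by (rule inj_onI) (simp add: left_half_mirror_inj)
    show "boundary (left_half \<sigma>) = boundary (left_half (\<sigma> \<circ> mirror))"
      if "\<sigma> \<in> Omega_per (2 * K) L" for \<sigma>
      using that by (simp add: boundary_mirror Omega_per_iff)
    show "\<exists>\<sigma>\<in>Omega_per (2 * K) L. left_half \<sigma> = left_half \<sigma>\<^sub>1 \<and> left_half (\<sigma> \<circ> mirror) = left_half \<sigma>\<^sub>2"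
      if "\<sigma>\<^sub>1 \<in> Omega_per (2 * K) L" and "\<sigma>\<^sub>2 \<in> Omega_per (2 * K) L"
        and "boundary (left_half \<sigma>\<^sub>1) = boundary (left_half \<sigma>\<^sub>2)" for \<sigma>\<^sub>1 \<sigma>\<^sub>2
      using glue_halves that by simp
    show "g \<sigma> = g \<sigma>'"
      if "\<sigma> \<in> Omega_per (2 * K) L" and "\<sigma>' \<in> Omega_per (2 * K) L" and "left_half \<sigma> = left_half \<sigma>'"
      for \<sigma> \<sigma>'
    proof -
      have "\<sigma> \<in> Omega" and "\<sigma>' \<in> Omega"
        using that(1,2) by (simp_all add: Omega_per_def)
      then show ?thesis
        using strip_vacant_left_half[OF that(3)] left_half_determines_local[OF assms _ _ that(3)]
        by (simp add: g_def)
    qed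
  qed
  also have "\<dots> = (\<Sum>\<sigma>\<in>Omega_per (2 * K) L. weight (rect (2 * K) L 0 0) lam \<sigma> * (f \<sigma> * f (\<sigma> \<circ> mirror)))"
  proof (rule sum.cong)
    fix \<sigma> assume "\<sigma> \<in> Omega_per (2 * K) L"
    then have per: "periodic (2 * K) L \<sigma>" by (simp add: Omega_per_iff)
    show "g \<sigma> * g (\<sigma> \<circ> mirror) = weight (rect (2 * K) L 0 0) lam \<sigma> * (f \<sigma> * f (\<sigma> \<circ> mirror))"
      unfolding g_def weight_split[OF per] by (simp only: mult_ac)
  qed simp
  finally show ?thesis .
qed

end

section \<open>Transposition\<close>

lemma adjacent_swap: "adjacent u v \<Longrightarrow> adjacent (prod.swap u) (prod.swap v)"
  by (auto simp: adjacent_def prod_eq_iff)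

lemma Omega_per_swap: "\<sigma> \<in> Omega_per W H \<Longrightarrow> \<sigma> \<circ> prod.swap \<in> Omega_per H W"
  by (simp add: Omega_per_iff admissible_comp adjacent_swap) (simp add: periodic_def)

lemma Omega_per_swap_image: "Omega_per W H = (\<lambda>\<sigma>. \<sigma> \<circ> prod.swap) ` Omega_per H W"
proof
  show "Omega_per W H \<subseteq> (\<lambda>\<sigma>. \<sigma> \<circ> prod.swap) ` Omega_per H W"
  proof
    fix \<sigma> assume "\<sigma> \<in> Omega_per W H"
    then have "\<sigma> \<circ> prod.swap \<in> Omega_per H W" by (rule Omega_per_swap)
    then show "\<sigma> \<in> (\<lambda>\<sigma>. \<sigma> \<circ> prod.swap) ` Omega_per H W"
      by (rule image_eqI[rotated]) (simp add: comp_assoc)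
  qed
  show "(\<lambda>\<sigma>. \<sigma> \<circ> prod.swap) ` Omega_per H W \<subseteq> Omega_per W H"
    using Omega_per_swap by blast
qed

lemma n_vacant_swap: "n_vacant (rect W H 0 0) (\<sigma> \<circ> prod.swap) = n_vacant (rect H W 0 0) \<sigma>"
  unfolding n_vacant_rect
  by (rule bij_betw_same_card[of prod.swap], rule bij_betw_byWitness[where f' = prod.swap])
    (auto simp: vacant_iff)

lemma is_local_swap:
  assumes "is_local (rect K L x0 y0) f"
  shows "is_local (rect L K y0 x0) (\<lambda>\<sigma>. f (\<sigma> \<circ> prod.swap))"
  unfolding is_local_def
proof (intro ballI impI)
  fix \<sigma> \<sigma>' assume "\<sigma> \<in> Omega" "\<sigma>' \<in> Omega"
    and agree: "\<forall>a b. (real_of_int a, real_of_int b) \<in> rect L K y0 x0 \<longrightarrow> \<sigma> (a, b) = \<sigma>' (a, b)"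
  then have "\<sigma> \<circ> prod.swap \<in> Omega" "\<sigma>' \<circ> prod.swap \<in> Omega"
    by (simp_all add: Omega_iff_admissible admissible_comp adjacent_swap)
  then show "f (\<sigma> \<circ> prod.swap) = f (\<sigma>' \<circ> prod.swap)"
  proof (rule assms[unfolded is_local_def, rule_format])
    fix a b assume "(real_of_int a, real_of_int b) \<in> rect K L x0 y0"
    then have "(real_of_int b, real_of_int a) \<in> rect L K y0 x0" by (auto simp: rect_def)
    then show "(\<sigma> \<circ> prod.swap) (a, b) = (\<sigma>' \<circ> prod.swap) (a, b)" using agree by simp
  qed
qed

lemma reflection_positive_horizontal:
  assumes "0 < K" and "0 < L" and "is_local (rect K L x0 y0) f"
  shows "0 \<le> (\<Sum>\<sigma>\<in>Omega_per K (2 * L). weight (rect K (2 * L) 0 0) lam \<sigma> * (f \<sigma> * f (\<sigma> \<circ> reflH (y0 + L))))"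
proof -
  interpret vertical_reflection L K y0
    using assms by unfold_locales
  have swap_reflH: "\<sigma> \<circ> prod.swap \<circ> reflH (y0 + L) = \<sigma> \<circ> reflV (y0 + L) \<circ> prod.swap" for \<sigma> :: config
    by (auto simp: reflH_def reflV_def)
  have inj: "inj (\<lambda>\<sigma> :: config. \<sigma> \<circ> prod.swap)"
    by (rule injI) (metis comp_assoc comp_id swap_comp_swap)
  have "(\<Sum>\<sigma>\<in>Omega_per K (2 * L). weight (rect K (2 * L) 0 0) lam \<sigma> * (f \<sigma> * f (\<sigma> \<circ> reflH (y0 + L))))
    = (\<Sum>\<sigma>\<in>Omega_per (2 * L) K. weight (rect (2 * L) K 0 0) lam \<sigma>
        * (f (\<sigma> \<circ> prod.swap) * f (\<sigma> \<circ> reflV (y0 + L) \<circ> prod.swap)))"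
    by (subst Omega_per_swap_image)
      (simp add: sum.reindex[OF inj_on_subset[OF inj]] weight_def n_vacant_swap swap_reflH)
  also have "\<dots> \<ge> 0"
    using reflection_positive[OF is_local_swap[OF assms(3)]] by simp
  finally show ?thesis .
qed

lemma mu_per_nonneg:
  assumes "0 \<le> (\<Sum>\<sigma>\<in>Omega_per W H. weight (rect W H 0 0) lam \<sigma> * g \<sigma>)"
  shows "0 \<le> mu_per W H 0 0 lam g"
  unfolding mu_per_def using assms by (simp add: weight_def sum_nonneg)

theorem lemma3p1:
  fixes K L x0 y0 :: int and lam :: real and f :: "config \<Rightarrow> real"
  assumes "K > 0" and "L > 0" and "lam > 0"
    and "is_local (rect K L x0 y0) f"
  shows "mu_per (2 * K) L 0 0 lam (\<lambda>\<sigma>. f \<sigma> * f (\<sigma> \<circ> reflV (x0 + K))) \<ge> 0 \<and>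
         mu_per K (2 * L) 0 0 lam (\<lambda>\<sigma>. f \<sigma> * f (\<sigma> \<circ> reflH (y0 + L))) \<ge> 0"
proof
  interpret vertical_reflection K L x0
    using assms by unfold_locales
  show "mu_per (2 * K) L 0 0 lam (\<lambda>\<sigma>. f \<sigma> * f (\<sigma> \<circ> reflV (x0 + K))) \<ge> 0"
    by (rule mu_per_nonneg) (rule reflection_positive[OF assms(4)])
  show "mu_per K (2 * L) 0 0 lam (\<lambda>\<sigma>. f \<sigma> * f (\<sigma> \<circ> reflH (y0 + L))) \<ge> 0"
    by (rule mu_per_nonneg) (rule reflection_positive_horizontal[OF assms(1,2,4)])
qed

end
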